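(* Let $A\in\mathbb{R}^{n\times n}$ and $C_i\in\mathbb{R}^{s_i\times n}$, $i\in\{1,\dots,m\}$, be such that $(C,A)$ is observable, where $C=\begin{bmatrix}C_1^\top&\cdots&C_m^\top\end{bmatrix}^\top$, and suppose the neighbor graph $\mathbb{N}$ is strongly connected. Let $\tilde A=I_m\otimes A$, $B_i=b_i\otimes I_n$ ($b_i$ the $i$-th unit vector of $\mathbb{R}^m$), $C_{ii}=C_iB_i^\top$, and $C_{ij}=c_{ij}\otimes I_n$ for $j\in\mathcal{N}_i$, $j\neq i$, where $c_{ij}\in\mathbb{R}^{1\times m}$ has entry $-1$ in position $i$, $+1$ in position $j$ and zeros elsewhere. Then the multi-channel system $$\dot\epsilon=\tilde A\epsilon+\sum_{i=1}^m\sum_{j\in\mathcal{N}_i}B_iu_{ij},\qquad y_{ij}=C_{ij}\epsilon,\quad ij\in\mathcal{I}=\{ij:i\in\{1,\dots,m\},\ j\in\mathcal{N}_i\},$$ in which channel $ij$ has input matrix $B_i$ and output matrix $C_{ij}$, is jointly controllable and jointly observable.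
   Context: Agents $1,\dots,m$ have neighbor sets $\mathcal{N}_i\ni i$; the neighbor graph $\mathbb{N}$ is the directed graph on $\{1,\dots,m\}$ with an arc from $j$ to $i$ whenever $j\in\mathcal{N}_i$, $j\neq i$, and $c_{ij}$ is the row of the transpose of its incidence matrix corresponding to that arc. A multi-channel system is jointly controllable (resp. jointly observable) if the pair consisting of $\tilde A$ and the block row of all input matrices is controllable (resp. the block column of all output matrices together with $\tilde A$ is observable). *)

theory Defs
  imports "Jordan_Normal_Form.DL_Rank"
begin

definition kron :: "'a::times mat \<Rightarrow> 'a mat \<Rightarrow> 'a mat" where
  "kron P Q = mat (dim_row P * dim_row Q) (dim_col P * dim_col Q)
     (\<lambda>(i,j). P $$ (i div dim_row Q, j div dim_col Q) * Q $$ (i mod dim_row Q, j mod dim_col Q))"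

definition hcat :: "nat \<Rightarrow> 'a mat list \<Rightarrow> 'a mat" where
  "hcat r Ms = mat_of_cols r (concat (map cols Ms))"

definition vcat :: "nat \<Rightarrow> 'a mat list \<Rightarrow> 'a mat" where
  "vcat c Ms = mat_of_rows c (concat (map rows Ms))"

definition controllable :: "real mat \<Rightarrow> real mat \<Rightarrow> bool" where
  "controllable A B \<longleftrightarrow>
     (let N = dim_row A;
          K = hcat N (map (\<lambda>k. (A ^\<^sub>m k) * B) [0..<N])
      in vec_space.rank N K = N)"

definition observable :: "real mat \<Rightarrow> real mat \<Rightarrow> bool" where
  "observable C A \<longleftrightarrow>
     (let N = dim_col A;
          Ob = vcat N (map (\<lambda>k. C * (A ^\<^sub>m k)) [0..<N])
      in vec_space.rank (dim_row Ob) Ob = N)"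

(* agents are 0,...,m-1; neighbor sets Nb i; arc j -> i iff j in Nb i, j ~= i *)
definition nbr_arcs :: "nat \<Rightarrow> (nat \<Rightarrow> nat set) \<Rightarrow> (nat \<times> nat) set" where
  "nbr_arcs m Nb = {(j, i). i < m \<and> j \<in> Nb i \<and> j \<noteq> i}"

definition strongly_connected_nbr :: "nat \<Rightarrow> (nat \<Rightarrow> nat set) \<Rightarrow> bool" where
  "strongly_connected_nbr m Nb \<longleftrightarrow> (\<forall>i<m. \<forall>j<m. (i, j) \<in> (nbr_arcs m Nb)\<^sup>*)"

definition channels :: "nat \<Rightarrow> (nat \<Rightarrow> nat set) \<Rightarrow> (nat \<times> nat) list" where
  "channels m Nb = concat (map (\<lambda>i. map (\<lambda>j. (i, j)) (sorted_list_of_set (Nb i))) [0..<m])"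

definition unit_col :: "nat \<Rightarrow> nat \<Rightarrow> real mat" where
  "unit_col m i = mat m 1 (\<lambda>(r, _). if r = i then 1 else 0)"

definition inc_row :: "nat \<Rightarrow> nat \<Rightarrow> nat \<Rightarrow> real mat" where
  "inc_row m i j = mat 1 m (\<lambda>(_, k). if k = i then -1 else if k = j then 1 else 0)"

definition Atil :: "nat \<Rightarrow> real mat \<Rightarrow> real mat" where
  "Atil m A = kron (1\<^sub>m m) A"

definition Bmat :: "nat \<Rightarrow> nat \<Rightarrow> nat \<Rightarrow> real mat" where
  "Bmat m n i = kron (unit_col m i) (1\<^sub>m n)"

definition Cmat :: "nat \<Rightarrow> nat \<Rightarrow> (nat \<Rightarrow> real mat) \<Rightarrow> nat \<Rightarrow> nat \<Rightarrow> real mat" where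
  "Cmat m n C i j = (if j = i then C i * transpose_mat (Bmat m n i) else kron (inc_row m i j) (1\<^sub>m n))"

definition jointly_controllable :: "nat \<Rightarrow> nat \<Rightarrow> (nat \<Rightarrow> nat set) \<Rightarrow> real mat \<Rightarrow> bool" where
  "jointly_controllable m n Nb A \<longleftrightarrow>
     controllable (Atil m A) (hcat (m * n) (map (\<lambda>(i, j). Bmat m n i) (channels m Nb)))"

definition jointly_observable :: "nat \<Rightarrow> nat \<Rightarrow> (nat \<Rightarrow> nat set) \<Rightarrow> (nat \<Rightarrow> real mat) \<Rightarrow> real mat \<Rightarrow> bool" where
  "jointly_observable m n Nb C A \<longleftrightarrow>
     observable (vcat (m * n) (map (\<lambda>(i, j). Cmat m n C i j) (channels m Nb))) (Atil m A)"

end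

theory Submission
  imports Defs
begin

text \<open>
If the outputs of the joint system vanish along an initial state \<open>\<epsilon> = (\<epsilon>\<^sub>1, \<dots>, \<epsilon>\<^sub>m)\<close>,
the channels \<open>c\<^sub>i\<^sub>j \<otimes> I\<^sub>n\<close> give \<open>\<epsilon>\<^sub>i = \<epsilon>\<^sub>j\<close> along every arc of the neighbor graph, so by strong
connectivity all blocks equal one vector \<open>v\<close>. Since \<open>I\<^sub>m \<otimes> A\<close> acts blockwise, the self channels
\<open>C\<^sub>i B\<^sub>i\<^sup>T\<close> then give \<open>C\<^sub>i A\<^sup>k v = 0\<close> for all \<open>i\<close> and \<open>k\<close>, whence \<open>v = 0\<close> by observability of
\<open>(C, A)\<close>. Joint controllability needs no hypothesis on \<open>A\<close>: the inputs \<open>B\<^sub>i = b\<^sub>i \<otimes> I\<^sub>n\<close> of the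
self channels already contain every unit vector of \<open>\<real>\<^sup>m\<^sup>n\<close> among their columns.
\<close>

lemma mult_mat_vec_unit_vec:
  fixes M :: "'a :: semiring_1 mat"
  assumes "M \<in> carrier_mat nr nc" and "i < nc"
  shows "M *\<^sub>v unit_vec nc i = col M i"
  using assms by (intro eq_vecI) (auto simp: scalar_prod_right_unit)

context vec_space
begin

lemma distinct_cols_if_rank_eq_dim_col:
  assumes M: "M \<in> carrier_mat n nc" and r: "rank M = nc"
  shows "distinct (cols M)"
proof (rule ccontr)
  assume "\<not> distinct (cols M)"
  then have card_cols: "card (set (cols M)) < nc"
    using M card_distinct[of "cols M"] card_length[of "cols M"] by fastforce
  obtain S where S: "maximal S (\<lambda>T. T \<subseteq> set (cols M) \<and> lin_indpt T)"
    using maximal_exists[of "\<lambda>T. T \<subseteq> set (cols M) \<and> lin_indpt T" "card (set (cols M))" "{}"]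
    by (meson List.finite_set card_mono empty_iff empty_subsetI finite_lin_indpt2 rev_finite_subset)
  then have "card S \<le> card (set (cols M))" by (simp add: card_mono maximal_def)
  with card_cols rank_card_indpt[OF M S] r show False by simp
qed

lemma distinct_cols_if_trivial_kernel:
  fixes M :: "'a mat"
  assumes M: "M \<in> carrier_mat n nc"
    and ker: "\<forall>x\<in>carrier_vec nc. M *\<^sub>v x = 0\<^sub>v n \<longrightarrow> x = 0\<^sub>v nc"
  shows "distinct (cols M)"
proof (rule ccontr)
  assume "\<not> distinct (cols M)"
  then obtain i j where ij: "i < nc" "j < nc" "i \<noteq> j" "col M i = col M j"
    using M by (auto simp: distinct_conv_nth)
  define x :: "'a vec" where "x = unit_vec nc i - unit_vec nc j"
  have "M *\<^sub>v x = M *\<^sub>v unit_vec nc i - M *\<^sub>v unit_vec nc j"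
    unfolding x_def using M by (simp add: mult_minus_distrib_mat_vec)
  also have "\<dots> = 0\<^sub>v n" using ij M by (simp add: mult_mat_vec_unit_vec)
  finally have "x = 0\<^sub>v nc" using ker unfolding x_def by simp
  then have "x $ i = 0" using ij(1) by simp
  with ij show False unfolding x_def by simp
qed

lemma rank_eq_dim_col_iff_trivial_kernel:
  assumes M: "M \<in> carrier_mat n nc"
  shows "rank M = nc \<longleftrightarrow> (\<forall>x\<in>carrier_vec nc. M *\<^sub>v x = 0\<^sub>v n \<longrightarrow> x = 0\<^sub>v nc)"
proof
  assume r: "rank M = nc"
  have dist: "distinct (cols M)" using distinct_cols_if_rank_eq_dim_col[OF M r] .
  have indpt: "lin_indpt (set (cols M))" using full_rank_lin_indpt[OF M r dist] .
  show "\<forall>x\<in>carrier_vec nc. M *\<^sub>v x = 0\<^sub>v n \<longrightarrow> x = 0\<^sub>v nc"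
    using lin_depI[OF M _ _ _ dist] indpt by blast
next
  assume ker: "\<forall>x\<in>carrier_vec nc. M *\<^sub>v x = 0\<^sub>v n \<longrightarrow> x = 0\<^sub>v nc"
  have dist: "distinct (cols M)" using distinct_cols_if_trivial_kernel[OF M ker] .
  have "lin_indpt (set (cols M))"
    using lin_depE[OF M _ dist] ker by metis
  then show "rank M = nc" using lin_indpt_full_rank[OF M dist] by blast
qed

lemma rank_eq_if_unit_vecs_subset_cols:
  assumes M: "M \<in> carrier_mat n nc" and U: "set (unit_vecs n) \<subseteq> set (cols M)"
  shows "rank M = n"
proof -
  have "span (set (cols M)) = carrier_vec n"
  proof
    show "span (set (cols M)) \<subseteq> carrier_vec n"
      using M cols_dim span_is_subset2[of "set (cols M)"] by blast
    show "carrier_vec n \<subseteq> span (set (cols M))"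
      using span_is_monotone[OF U] span_unit_vecs_is_carrier by simp
  qed
  then have "span_vs (set (cols M)) = V" by simp
  then show ?thesis unfolding rank_def using dim_is_n by simp
qed

end

lemma cols_hcat:
  assumes "\<forall>M\<in>set Ms. dim_row M = r"
  shows "cols (hcat r Ms) = concat (map cols Ms)"
  unfolding hcat_def using assms by (intro cols_mat_of_cols) (force dest: subsetD[OF cols_dim])

lemma rows_vcat:
  assumes "\<forall>M\<in>set Ms. dim_col M = c"
  shows "rows (vcat c Ms) = concat (map rows Ms)"
  unfolding vcat_def using assms by (intro rows_mat_of_rows) (force dest: subsetD[OF rows_carrier])

lemma hcat_carrier: "hcat r Ms \<in> carrier_mat r (dim_col (hcat r Ms))"
  unfolding hcat_def by simp

lemma vcat_carrier: "vcat c Ms \<in> carrier_mat (dim_row (vcat c Ms)) c"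
  unfolding vcat_def by simp

lemma vcat_mult_vec_eq_0_iff:
  assumes "\<forall>M\<in>set Ms. dim_col M = c"
  shows "vcat c Ms *\<^sub>v x = 0\<^sub>v (dim_row (vcat c Ms)) \<longleftrightarrow> (\<forall>M\<in>set Ms. M *\<^sub>v x = 0\<^sub>v (dim_row M))"
proof -
  have mult_eq_0_iff: "N *\<^sub>v x = 0\<^sub>v (dim_row N) \<longleftrightarrow> (\<forall>r\<in>set (rows N). r \<bullet> x = 0)" for N :: "'a mat"
    by (auto simp: vec_eq_iff rows_def)
  show ?thesis unfolding mult_eq_0_iff rows_vcat[OF assms] by auto
qed

lemma observable_iff_trivial_unobservable_subspace:
  assumes A: "A \<in> carrier_mat N N" and C: "C \<in> carrier_mat p N"
  shows "observable C A \<longleftrightarrow>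
    (\<forall>x\<in>carrier_vec N. (\<forall>k<N. C *\<^sub>v (A ^\<^sub>m k *\<^sub>v x) = 0\<^sub>v p) \<longrightarrow> x = 0\<^sub>v N)"
proof -
  define Ob where "Ob = vcat N (map (\<lambda>k. C * A ^\<^sub>m k) [0..<N])"
  have Ob: "Ob \<in> carrier_mat (dim_row Ob) N" unfolding Ob_def by (rule vcat_carrier)
  have "Ob *\<^sub>v x = 0\<^sub>v (dim_row Ob) \<longleftrightarrow> (\<forall>k<N. C *\<^sub>v (A ^\<^sub>m k *\<^sub>v x) = 0\<^sub>v p)"
    if "x \<in> carrier_vec N" for x
    unfolding Ob_def using A C that
    by (subst vcat_mult_vec_eq_0_iff) (auto simp: assoc_mult_mat_vec[of _ p N _ N])
  moreover have "observable C A \<longleftrightarrow> vec_space.rank (dim_row Ob) Ob = N"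
    unfolding observable_def Let_def Ob_def using A by simp
  ultimately show ?thesis
    using vec_space.rank_eq_dim_col_iff_trivial_kernel[OF Ob] by blast
qed

lemma controllable_if_unit_vecs_subset_cols:
  assumes A: "A \<in> carrier_mat N N" and B: "B \<in> carrier_mat N q"
    and U: "set (unit_vecs N) \<subseteq> set (cols B)"
  shows "controllable A B"
proof -
  define K where "K = hcat N (map (\<lambda>k. A ^\<^sub>m k * B) [0..<N])"
  have "set (unit_vecs N) \<subseteq> set (cols K)"
  proof (cases "N = 0")
    case True
    then show ?thesis by (simp add: unit_vecs_def)
  next
    case False
    have "A ^\<^sub>m 0 * B = B" using A B by simp
    then have "set (cols B) \<subseteq> set (cols K)"
      unfolding K_def using A B False by (subst cols_hcat) force+
    with U show ?thesis by blast
  qed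
  moreover have "K \<in> carrier_mat N (dim_col K)" unfolding K_def by (rule hcat_carrier)
  ultimately have "vec_space.rank N K = N"
    by (simp add: vec_space.rank_eq_if_unit_vecs_subset_cols)
  then show ?thesis unfolding controllable_def Let_def K_def using A by simp
qed

definition block_vec :: "nat \<Rightarrow> 'a vec \<Rightarrow> nat \<Rightarrow> 'a vec" where
  "block_vec n y i = vec n (\<lambda>l. y $ (i * n + l))"

lemma dim_block_vec [simp]: "dim_vec (block_vec n y i) = n"
  by (simp add: block_vec_def)

lemma block_vec_carrier [simp]: "block_vec n y i \<in> carrier_vec n"
  by (simp add: carrier_vecI)

lemma index_block_vec [simp]: "l < n \<Longrightarrow> block_vec n y i $ l = y $ (i * n + l)"
  by (simp add: block_vec_def)

lemma block_index_less: "i < m \<Longrightarrow> l < n \<Longrightarrow> i * n + l < m * (n :: nat)"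
  using mult_le_mono1[of "Suc i" m n] by simp

lemma eq_0_if_block_vecs_eq_0:
  assumes y: "y \<in> carrier_vec (m * n)" and blocks: "\<forall>i<m. block_vec n y i = 0\<^sub>v n"
  shows "y = 0\<^sub>v (m * n)"
proof (rule eq_vecI)
  fix c assume "c < dim_vec (0\<^sub>v (m * n) :: 'a vec)"
  then have c: "c < m * n" by simp
  then have "c div n < m" "c mod n < n"
    by (simp_all add: less_mult_imp_div_less) (cases n; simp)
  then have "block_vec n y (c div n) $ (c mod n) = 0" using blocks by simp
  then show "y $ c = 0\<^sub>v (m * n) $ c" using \<open>c mod n < n\<close> c by simp
qed (use y in simp)

lemma sum_lessThan_mult_nat:
  "(\<Sum>c<m * n. f c) = (\<Sum>a<m. \<Sum>b<n. f (a * n + b :: nat))"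
proof -
  have "(\<Sum>b<n. f (a * n + b)) = (\<Sum>c = a * n..<a * n + n. f c)" for a
    using sum.shift_bounds_nat_ivl[of f 0 "a * n" n] by (simp add: atLeast0LessThan add.commute)
  then show ?thesis by (simp add: sum.nat_group)
qed

lemma kron_carrier: "kron P Q \<in> carrier_mat (dim_row P * dim_row Q) (dim_col P * dim_col Q)"
  unfolding kron_def by simp

lemma index_kron:
  "r < dim_row P * dim_row Q \<Longrightarrow> c < dim_col P * dim_col Q \<Longrightarrow>
    kron P Q $$ (r, c) = P $$ (r div dim_row Q, c div dim_col Q) * Q $$ (r mod dim_row Q, c mod dim_col Q)"
  unfolding kron_def by simp

lemma index_kron_mult_vec:
  fixes P Q :: "'a :: comm_semiring_1 mat"
  assumes r: "r < dim_row P * dim_row Q" and y: "y \<in> carrier_vec (dim_col P * dim_col Q)"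
  shows "(kron P Q *\<^sub>v y) $ r = (\<Sum>a<dim_col P. \<Sum>b<dim_col Q.
      P $$ (r div dim_row Q, a) * Q $$ (r mod dim_row Q, b) * y $ (a * dim_col Q + b))"
proof -
  have "(kron P Q *\<^sub>v y) $ r = (\<Sum>c<dim_col P * dim_col Q. kron P Q $$ (r, c) * y $ c)"
    using r y kron_carrier[of P Q] by (simp add: scalar_prod_def row_def atLeast0LessThan)
  then show ?thesis
    using r by (simp add: sum_lessThan_mult_nat index_kron block_index_less)
qed

lemma Atil_carrier: "A \<in> carrier_mat n n \<Longrightarrow> Atil m A \<in> carrier_mat (m * n) (m * n)"
  unfolding Atil_def using kron_carrier[of "1\<^sub>m m" A] by simp

lemma block_vec_Atil_mult:
  assumes A: "A \<in> carrier_mat n n" and y: "y \<in> carrier_vec (m * n)" and i: "i < m"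
  shows "block_vec n (Atil m A *\<^sub>v y) i = A *\<^sub>v block_vec n y i"
proof (rule eq_vecI)
  fix l assume "l < dim_vec (A *\<^sub>v block_vec n y i)"
  then have l: "l < n" using A by simp
  have "(Atil m A *\<^sub>v y) $ (i * n + l) = (\<Sum>a<m. \<Sum>b<n. 1\<^sub>m m $$ (i, a) * A $$ (l, b) * y $ (a * n + b))"
    unfolding Atil_def using index_kron_mult_vec[of "i * n + l" "1\<^sub>m m" A y] block_index_less[OF i l] y A l
    by simp
  also have "\<dots> = (\<Sum>a<m. if a = i then \<Sum>b<n. A $$ (l, b) * y $ (a * n + b) else 0)"
    using i by (intro sum.cong refl) (auto simp: one_mat_def)
  also have "\<dots> = (\<Sum>b<n. A $$ (l, b) * y $ (i * n + b))"
    using i by simp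
  also have "\<dots> = (A *\<^sub>v block_vec n y i) $ l"
    using A l by (simp add: scalar_prod_def row_def atLeast0LessThan block_vec_def)
  finally show "block_vec n (Atil m A *\<^sub>v y) i $ l = (A *\<^sub>v block_vec n y i) $ l"
    using l by simp
qed (use A in simp)

lemma block_vec_Atil_pow_mult:
  assumes A: "A \<in> carrier_mat n n" and i: "i < m"
  shows "y \<in> carrier_vec (m * n) \<Longrightarrow> block_vec n (Atil m A ^\<^sub>m k *\<^sub>v y) i = A ^\<^sub>m k *\<^sub>v block_vec n y i"
proof (induction k arbitrary: y)
  case 0
  then show ?case using A Atil_carrier[OF A, of m] by (intro eq_vecI) auto
next
  case (Suc k)
  have At: "Atil m A \<in> carrier_mat (m * n) (m * n)" using A by (rule Atil_carrier)
  have "block_vec n (Atil m A ^\<^sub>m Suc k *\<^sub>v y) i = block_vec n (Atil m A ^\<^sub>m k *\<^sub>v (Atil m A *\<^sub>v y)) i"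
    using At Suc.prems by (simp add: assoc_mult_mat_vec[of _ "m * n" "m * n"])
  also have "\<dots> = A ^\<^sub>m k *\<^sub>v (A *\<^sub>v block_vec n y i)"
    using Suc.IH At Suc.prems block_vec_Atil_mult[OF A Suc.prems i] by simp
  also have "\<dots> = A ^\<^sub>m Suc k *\<^sub>v block_vec n y i"
    using A by (simp add: assoc_mult_mat_vec[of _ n n])
  finally show ?case .
qed

lemma Bmat_carrier: "Bmat m n i \<in> carrier_mat (m * n) n"
  unfolding Bmat_def using kron_carrier[of "unit_col m i" "1\<^sub>m n"] by (simp add: unit_col_def)

lemma col_Bmat:
  assumes i: "i < m" and l: "l < n"
  shows "col (Bmat m n i) l = unit_vec (m * n) (i * n + l)"
proof (rule eq_vecI)
  fix r assume "r < dim_vec (unit_vec (m * n) (i * n + l))"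
  then have r: "r < m * n" by simp
  then have "r div n < m" by (simp add: less_mult_imp_div_less)
  moreover have "r = i * n + l \<longleftrightarrow> r div n = i \<and> r mod n = l"
    using l div_mult_mod_eq[of r n] by auto
  ultimately show "col (Bmat m n i) l $ r = unit_vec (m * n) (i * n + l) $ r"
    using r l Bmat_carrier[of m n i] block_index_less[OF i l]
    by (simp add: Bmat_def index_kron unit_col_def)
qed (simp add: Bmat_carrier[THEN carrier_matD(1)])

lemma transpose_Bmat_mult_vec:
  assumes i: "i < m" and y: "y \<in> carrier_vec (m * n)"
  shows "transpose_mat (Bmat m n i) *\<^sub>v y = block_vec n y i"
proof (rule eq_vecI)
  fix l assume "l < dim_vec (block_vec n y i)"
  then have l: "l < n" by simp
  then have "(transpose_mat (Bmat m n i) *\<^sub>v y) $ l = unit_vec (m * n) (i * n + l) \<bullet> y"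
    using Bmat_carrier[of m n i] col_Bmat[OF i l] by simp
  then show "(transpose_mat (Bmat m n i) *\<^sub>v y) $ l = block_vec n y i $ l"
    using l y block_index_less[OF i l] by simp
qed (use Bmat_carrier[of m n i] in \<open>simp add: block_vec_def\<close>)

lemma incidence_kron_carrier: "kron (inc_row m i j) (1\<^sub>m n) \<in> carrier_mat n (m * n)"
  using kron_carrier[of "inc_row m i j" "1\<^sub>m n"] by (simp add: inc_row_def)

lemma incidence_kron_mult_vec:
  assumes i: "i < m" and j: "j < m" and ij: "i \<noteq> j" and y: "y \<in> carrier_vec (m * n)"
  shows "kron (inc_row m i j) (1\<^sub>m n) *\<^sub>v y = block_vec n y j - block_vec n y i"
proof (rule eq_vecI)
  fix l assume "l < dim_vec (block_vec n y j - block_vec n y i)"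
  then have l: "l < n" by simp
  have "(kron (inc_row m i j) (1\<^sub>m n) *\<^sub>v y) $ l =
      (\<Sum>a<m. \<Sum>b<n. inc_row m i j $$ (0, a) * 1\<^sub>m n $$ (l, b) * y $ (a * n + b))"
    using index_kron_mult_vec[of l "inc_row m i j" "1\<^sub>m n" y] y l by (simp add: inc_row_def)
  also have "\<dots> = (\<Sum>a<m. (of_bool (a = j) - of_bool (a = i)) * y $ (a * n + l))"
    using l ij by (intro sum.cong refl)
      (auto simp: one_mat_def inc_row_def of_bool_def[symmetric] sum_negf Int_def Collect_conv_if)
  also have "\<dots> = y $ (j * n + l) - y $ (i * n + l)"
    using i j by (simp add: left_diff_distrib sum_subtractf Int_def Collect_conv_if)
  finally show "(kron (inc_row m i j) (1\<^sub>m n) *\<^sub>v y) $ l = (block_vec n y j - block_vec n y i) $ l"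
    using l by simp
qed (use incidence_kron_carrier[of m i j n] in simp)

lemma dim_col_Cmat [simp]: "dim_col (Cmat m n C i j) = m * n"
  using Bmat_carrier[of m n i] incidence_kron_carrier[of m i j n] by (simp add: Cmat_def)

lemma Cmat_self_mult_vec:
  assumes i: "i < m" and C: "C i \<in> carrier_mat p n" and y: "y \<in> carrier_vec (m * n)"
  shows "Cmat m n C i i *\<^sub>v y = C i *\<^sub>v block_vec n y i"
  using assoc_mult_mat_vec[OF C _ y, of "transpose_mat (Bmat m n i)"] Bmat_carrier[of m n i]
    transpose_Bmat_mult_vec[OF i y]
  by (simp add: Cmat_def)

lemma Cmat_mult_vec_eq_0_iff:
  assumes i: "i < m" and j: "j < m" and ij: "j \<noteq> i" and y: "y \<in> carrier_vec (m * n)"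
  shows "Cmat m n C i j *\<^sub>v y = 0\<^sub>v (dim_row (Cmat m n C i j)) \<longleftrightarrow> block_vec n y j = block_vec n y i"
proof -
  have "Cmat m n C i j *\<^sub>v y = block_vec n y j - block_vec n y i"
    using incidence_kron_mult_vec[OF i j _ y] ij by (simp add: Cmat_def)
  moreover have "dim_row (Cmat m n C i j) = n"
    using incidence_kron_carrier[of m i j n] ij by (simp add: Cmat_def)
  ultimately show ?thesis
    by (auto simp: vec_eq_iff)
qed

lemma set_channels:
  assumes "\<forall>i<m. finite (Nb i)"
  shows "set (channels m Nb) = {(i, j). i < m \<and> j \<in> Nb i}"
  using assms unfolding channels_def by auto

lemma strongly_connected_nbr_eq:
  assumes sc: "strongly_connected_nbr m Nb"
    and arc: "\<And>i j. i < m \<Longrightarrow> j \<in> Nb i \<Longrightarrow> j \<noteq> i \<Longrightarrow> f j = f i"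
    and "i < m" and "j < m"
  shows "f i = f j"
proof -
  have "(i, j) \<in> (nbr_arcs m Nb)\<^sup>*"
    using sc assms(3,4) unfolding strongly_connected_nbr_def by blast
  then show ?thesis
    by (induction rule: rtrancl_induct) (auto simp: nbr_arcs_def dest: arc)
qed

lemma jointly_controllable_if_self_channels:
  assumes A: "A \<in> carrier_mat n n" and self: "\<forall>i<m. i \<in> Nb i" and fin: "\<forall>i<m. finite (Nb i)"
  shows "jointly_controllable m n Nb A"
proof -
  define Bs where "Bs = map (\<lambda>(i, j). Bmat m n i) (channels m Nb)"
  have Bs: "\<forall>B\<in>set Bs. dim_row B = m * n"
    unfolding Bs_def using Bmat_carrier by fastforce
  have "set (unit_vecs (m * n)) \<subseteq> set (cols (hcat (m * n) Bs))"
  proof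
    fix v :: "real vec" assume "v \<in> set (unit_vecs (m * n))"
    then obtain c where c: "c < m * n" and v: "v = unit_vec (m * n) c"
      by (auto simp: unit_vecs_def)
    then have i: "c div n < m" and l: "c mod n < n"
      by (simp_all add: less_mult_imp_div_less) (cases n; simp)
    have "v \<in> set (cols (Bmat m n (c div n)))"
      using col_Bmat[OF i l] v l Bmat_carrier[of m n "c div n"] by (force simp: cols_def)
    moreover have "Bmat m n (c div n) \<in> set Bs"
      unfolding Bs_def using self fin i by (force simp: set_channels)
    ultimately show "v \<in> set (cols (hcat (m * n) Bs))"
      by (auto simp: cols_hcat[OF Bs])
  qed
  then show ?thesis
    using controllable_if_unit_vecs_subset_cols[OF Atil_carrier[OF A] hcat_carrier]
    unfolding jointly_controllable_def Bs_def by blast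
qed

lemma eq_0_if_channel_outputs_vanish:
  assumes A: "A \<in> carrier_mat n n" and C: "\<forall>i<m. C i \<in> carrier_mat (s i) n"
    and self: "\<forall>i<m. i \<in> Nb i" and Nb: "\<forall>i<m. Nb i \<subseteq> {0..<m}"
    and obs: "observable (vcat n (map C [0..<m])) A"
    and sc: "strongly_connected_nbr m Nb"
    and x: "x \<in> carrier_vec (m * n)"
    and out: "\<And>k i j. k < m * n \<Longrightarrow> i < m \<Longrightarrow> j \<in> Nb i \<Longrightarrow>
      Cmat m n C i j *\<^sub>v (Atil m A ^\<^sub>m k *\<^sub>v x) = 0\<^sub>v (dim_row (Cmat m n C i j))"
  shows "x = 0\<^sub>v (m * n)"
proof (cases "m * n = 0")
  case True
  then show ?thesis using x by auto
next
  case False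
  have At: "Atil m A \<in> carrier_mat (m * n) (m * n)" using A by (rule Atil_carrier)
  define v where "v = block_vec n x 0"
  have consensus: "block_vec n x i = v" if "i < m" for i
    unfolding v_def
  proof (rule strongly_connected_nbr_eq[OF sc _ that])
    fix i j assume arc: "i < m" "j \<in> Nb i" "j \<noteq> i"
    then have "j < m" using Nb by (meson atLeastLessThan_iff subsetD)
    then show "block_vec n x j = block_vec n x i"
      using out[of 0 i j] arc False At x Cmat_mult_vec_eq_0_iff[OF arc(1) _ arc(3) x] by simp
  qed (use False in simp)
  have "C i *\<^sub>v (A ^\<^sub>m k *\<^sub>v v) = 0\<^sub>v (s i)" if i: "i < m" and k: "k < n" for i k
  proof -
    have Ci: "C i \<in> carrier_mat (s i) n" using C i by blast
    have "k < m * n" using block_index_less[of 0 m k n] i k by simp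
    then have "Cmat m n C i i *\<^sub>v (Atil m A ^\<^sub>m k *\<^sub>v x) = 0\<^sub>v (s i)"
      using out[of k i i] self i carrier_matD[OF Ci] by (simp add: Cmat_def)
    moreover have "Cmat m n C i i *\<^sub>v (Atil m A ^\<^sub>m k *\<^sub>v x) = C i *\<^sub>v (A ^\<^sub>m k *\<^sub>v v)"
      using Cmat_self_mult_vec[where C = C, OF i Ci] block_vec_Atil_pow_mult[OF A i x] consensus[OF i]
        mult_mat_vec_carrier[OF pow_carrier_mat[OF At] x]
      by simp
    ultimately show ?thesis by simp
  qed
  then have "vcat n (map C [0..<m]) *\<^sub>v (A ^\<^sub>m k *\<^sub>v v) = 0\<^sub>v (dim_row (vcat n (map C [0..<m])))"
    if "k < n" for k
    using that C by (subst vcat_mult_vec_eq_0_iff) auto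
  moreover have "v \<in> carrier_vec n" unfolding v_def by simp
  ultimately have "v = 0\<^sub>v n"
    using obs observable_iff_trivial_unobservable_subspace[OF A vcat_carrier] by blast
  then show ?thesis using eq_0_if_block_vecs_eq_0[OF x] consensus by simp
qed

lemma jointly_observable_if_observable:
  assumes A: "A \<in> carrier_mat n n" and C: "\<forall>i<m. C i \<in> carrier_mat (s i) n"
    and self: "\<forall>i<m. i \<in> Nb i" and Nb: "\<forall>i<m. Nb i \<subseteq> {0..<m}"
    and obs: "observable (vcat n (map C [0..<m])) A"
    and sc: "strongly_connected_nbr m Nb"
  shows "jointly_observable m n Nb C A"
proof -
  define Cs where "Cs = map (\<lambda>(i, j). Cmat m n C i j) (channels m Nb)"
  have Cs: "\<forall>M\<in>set Cs. dim_col M = m * n" unfolding Cs_def by auto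
  have fin: "\<forall>i<m. finite (Nb i)" using Nb finite_subset by blast
  have "x = 0\<^sub>v (m * n)"
    if x: "x \<in> carrier_vec (m * n)"
      and unobs: "\<forall>k<m * n. vcat (m * n) Cs *\<^sub>v (Atil m A ^\<^sub>m k *\<^sub>v x) = 0\<^sub>v (dim_row (vcat (m * n) Cs))"
    for x
  proof (rule eq_0_if_channel_outputs_vanish[OF A C self Nb obs sc x])
    fix k i j assume "k < m * n" "i < m" "j \<in> Nb i"
    then show "Cmat m n C i j *\<^sub>v (Atil m A ^\<^sub>m k *\<^sub>v x) = 0\<^sub>v (dim_row (Cmat m n C i j))"
      using unobs fin vcat_mult_vec_eq_0_iff[OF Cs] unfolding Cs_def by (force simp: set_channels)
  qed
  then show ?thesis
    unfolding jointly_observable_def Cs_def[symmetric]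
    using observable_iff_trivial_unobservable_subspace[OF Atil_carrier[OF A] vcat_carrier] by blast
qed

theorem lemma4:
  fixes n m :: nat and A :: "real mat" and C :: "nat \<Rightarrow> real mat"
    and s :: "nat \<Rightarrow> nat" and Nb :: "nat \<Rightarrow> nat set"
  assumes A: "A \<in> carrier_mat n n"
    and Cdim: "\<forall>i<m. C i \<in> carrier_mat (s i) n"
    and Nb_self: "\<forall>i<m. i \<in> Nb i"
    and Nb_sub: "\<forall>i<m. Nb i \<subseteq> {0..<m}"
    and obs: "observable (vcat n (map C [0..<m])) A"
    and sc: "strongly_connected_nbr m Nb"
  shows "jointly_controllable m n Nb A \<and> jointly_observable m n Nb C A"
proof
  have "\<forall>i<m. finite (Nb i)" using Nb_sub finite_subset by blast
  then show "jointly_controllable m n Nb A"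
    using jointly_controllable_if_self_channels[OF A Nb_self] by blast
  show "jointly_observable m n Nb C A"
    using jointly_observable_if_observable[OF A Cdim Nb_self Nb_sub obs sc] .
qed

end
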